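(* Let $L_{\max}>0$ and let $V$ be a speed-density function on $[0,L_{\max}]$. Define the critical vehicle density $L^*=\arg\max_{0\le L\le L_{\max}}[V(L)L]$ and the optimum vehicle density for the eVCC system $L^\dagger=\arg\max_{0\le L\le L_{\max}}[V(L)^2L]$. Suppose (1) $V$ is monotonically non-increasing and $V(L)\ge 0$ for $0\le L\le L_{\max}$; and (2) either $V$ is concave, or $V(L)=G-\sum_{k=1}^K c_kL^{\alpha_k}$ with $\alpha_k\in(0,+\infty)\cup(-1,-\tfrac12)$, $c_k\ge 0$ for all $k$, and $G\ge 0$. Then $L^\dagger\le L^*$.
   Context: $V(L)$ denotes the average vehicle speed on the road as a function of vehicle density $L$, and $L_{\max}$ is the traffic-jam density. The traffic flow rate is $F=VL$, and $L^*$ maximizes it. In the short-deadline regime the deadline violation probability of the vehicular cloud computing system is (up to constants independent of $L$) $\exp(-c\,L\,V(L)^2)$ with $c>0$, so the density minimizing it is the maximizer $L^\dagger$ of $V(L)^2L$. The maximizers are denoted with argmax as single points. *)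

theory Defs
  imports "HOL-Analysis.Analysis"
begin

text \<open>Set of maximizers of f over S (the paper's argmax, a set; the paper treats it as a single point).\<close>
definition argmax_on :: "(real \<Rightarrow> real) \<Rightarrow> real set \<Rightarrow> real set" where
  "argmax_on f S = {x \<in> S. \<forall>y\<in>S. f y \<le> f x}"

end

theory Submission
  imports Defs
begin

text \<open>If \<open>L\<^sup>\<dagger> > L\<^sup>*\<close>, monotonicity gives \<open>V L\<^sup>\<dagger> \<le> V L\<^sup>*\<close>, and uniqueness of \<open>L\<^sup>*\<close> gives
  \<open>V L\<^sup>\<dagger> L\<^sup>\<dagger> < V L\<^sup>* L\<^sup>*\<close>. Multiplying the first inequality by the second shows that
  \<open>L\<^sup>*\<close> beats \<open>L\<^sup>\<dagger>\<close> for \<open>V\<^sup>2 L\<close> as well, a contradiction.\<close>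

lemma square_weighted_less:
  fixes v w x y :: real
  assumes "0 \<le> w" "w \<le> v" "0 \<le> x" "w * x < v * y"
  shows "w\<^sup>2 * x < v\<^sup>2 * y"
proof (cases "v = 0")
  case True
  then show ?thesis using assms by simp
next
  case False
  then have "v > 0" using assms(1,2) by simp
  have "w\<^sup>2 * x \<le> v * (w * x)"
    unfolding power2_eq_square using assms(1-3) by (simp add: mult.assoc mult_right_mono)
  also have "\<dots> < v * (v * y)" using \<open>v > 0\<close> assms(4) by simp
  finally show ?thesis by (simp add: power2_eq_square mult.assoc)
qed

lemma argmax_square_weighted_le_argmax:
  fixes V :: "real \<Rightarrow> real" and S :: "real set"
  assumes nonneg_dom: "S \<subseteq> {0..}"
    and mono: "\<forall>x\<in>S. \<forall>y\<in>S. x \<le> y \<longrightarrow> V y \<le> V x"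
    and nonneg: "\<forall>L\<in>S. V L \<ge> 0"
    and Lstar: "argmax_on (\<lambda>L. V L * L) S = {Lstar}"
    and Ldag: "Ldag \<in> argmax_on (\<lambda>L. (V L)\<^sup>2 * L) S"
  shows "Ldag \<le> Lstar"
proof (rule ccontr)
  assume "\<not> Ldag \<le> Lstar"
  have Lstar_in: "Lstar \<in> S" and Ldag_in: "Ldag \<in> S"
    and Ldag_max: "\<forall>y\<in>S. (V y)\<^sup>2 * y \<le> (V Ldag)\<^sup>2 * Ldag"
    using Lstar Ldag unfolding argmax_on_def by blast+
  have "V Ldag \<le> V Lstar"
    using mono Lstar_in Ldag_in \<open>\<not> Ldag \<le> Lstar\<close> by auto
  moreover have "V Ldag * Ldag < V Lstar * Lstar"
  proof -
    have "Ldag \<notin> argmax_on (\<lambda>L. V L * L) S" using Lstar \<open>\<not> Ldag \<le> Lstar\<close> by auto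
    moreover have "\<forall>y\<in>S. V y * y \<le> V Lstar * Lstar"
      using Lstar unfolding argmax_on_def by blast
    ultimately show ?thesis using Ldag_in Lstar_in unfolding argmax_on_def by (auto simp: not_le)
  qed
  ultimately have "(V Ldag)\<^sup>2 * Ldag < (V Lstar)\<^sup>2 * Lstar"
    using nonneg nonneg_dom Ldag_in by (intro square_weighted_less) auto
  then show False using Ldag_max Lstar_in by force
qed

theorem theorem3:
  fixes V :: "real \<Rightarrow> real" and Lmax Lstar Ldag :: real
  assumes Lmax_pos: "Lmax > 0"
    and Lstar: "argmax_on (\<lambda>L. V L * L) {0..Lmax} = {Lstar}"
    and Ldag: "argmax_on (\<lambda>L. (V L)\<^sup>2 * L) {0..Lmax} = {Ldag}"
    and mono: "\<forall>x\<in>{0..Lmax}. \<forall>y\<in>{0..Lmax}. x \<le> y \<longrightarrow> V y \<le> V x"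
    and nonneg: "\<forall>L\<in>{0..Lmax}. V L \<ge> 0"
    and shape: "concave_on {0..Lmax} V \<or>
      (\<exists>(K::nat) (G::real) (c::nat \<Rightarrow> real) (\<alpha>::nat \<Rightarrow> real).
          G \<ge> 0 \<and>
          (\<forall>k\<in>{1..K}. c k \<ge> 0 \<and> (\<alpha> k > 0 \<or> (-1 < \<alpha> k \<and> \<alpha> k < -1/2))) \<and>
          (\<forall>L\<in>{0..Lmax}. V L = G - (\<Sum>k=1..K. c k * L powr \<alpha> k)))"
  shows "Ldag \<le> Lstar"
  using mono nonneg Lstar Ldag by (intro argmax_square_weighted_le_argmax) auto

end
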